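(* Let $L\in4\mathbb{N}$, $t,m>0$ and $|U|$ small enough uniformly in $L$. For $(a,b)\in\{\pm1\}^2$ and a gauge-field configuration $\bm\sigma\in\{\pm1\}^{\text{edges}}$ with product $-1$ around every plaquette and products $a$, $b$ along $\mathcal{C}_1$, $\mathcal{C}_2$, let $$|\Omega_{ab}\rangle=\prod_{i\in\Gamma_L}\Big(\frac{1+Q_i}{2}\Big)|\psi_{\bm\sigma}\rangle\otimes|\bm\sigma\rangle .$$ Then: (1) $|\Omega_{ab}\rangle\in\mathcal{H}^{\rm phys}$; (2) $|\Omega_{ab}\rangle$ depends only on the choice of the background holonomies $(a,b)$, i.e. not on the representative $\bm\sigma$ of the gauge class (for gauge-equivalent $\bm\sigma'=A_\Lambda\bm\sigma$, $\Lambda\subset\Gamma_L$, with the ground state chosen as $|\psi_{\bm\sigma'}\rangle=(-1)^{N_\Lambda}|\psi_{\bm\sigma}\rangle$, the resulting vector is the same); (3) $|\Omega_{ab}\rangle\ne0$.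
   Context: $\Gamma_L=\mathbb{Z}_L^2$ periodic square lattice; $\mathcal{C}_1$ (horizontal) and $\mathcal{C}_2$ (vertical) fixed non-contractible cycles. $\mathcal{F}_L$ fermionic Fock space over $\ell^2(\Gamma_L\times\{\uparrow,\downarrow\})$ with CAR operators $a^\pm_{i,\eta}$, $n_i=\sum_\eta a^+_{i,\eta}a^-_{i,\eta}$, $N_\Lambda=\sum_{i\in\Lambda}n_i$. $\mathcal{H}_L=\mathcal{F}_L\otimes\bigotimes_{\text{edges}}\mathbb{C}^2$ with Pauli matrices $\hat\sigma^x_{ij},\hat\sigma^z_{ij}$ on edge $\{i,j\}$; $|\bm\sigma\rangle$ is the common eigenvector of all $\hat\sigma^z_{ij}$ with eigenvalues $\sigma_{ij}$. $A_i=\prod_{j\sim i}\hat\sigma^x_{ij}$, $A_\Lambda=\prod_{i\in\Lambda}A_i$, $Q_i=A_i(-1)^{n_i}$; $\mathcal{H}^{\rm phys}=\{\Psi\in\mathcal{H}_L:Q_i\Psi=\Psi\ \forall i\}$. $|\psi_{\bm\sigma}\rangle$ is the unique ground state on $\mathcal{F}_L$ of $$H(\bm\sigma)=-t\sum_{\{i,j\}}\sum_\eta\big(a^+_{i,\eta}\sigma_{ij}a^-_{j,\eta}+\mathrm{h.c.}\big)+m\sum_i(-1)^{i_1+i_2}n_i+U\sum_i\Big(n_{i,\uparrow}-\tfrac12\Big)\Big(n_{i,\downarrow}-\tfrac12\Big).$$ *)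

theory Defs
  imports Complex_Main
begin

type_synonym site = "nat \<times> nat"
type_synonym edge = "site \<times> nat"         \<comment> \<open>(i,d): edge from i to i + e_d, d \<in> {0,1}\<close>
type_synonym gauge = "edge \<Rightarrow> int"      \<comment> \<open>sigma, values +-1 on edges, 1 elsewhere\<close>
type_synonym fvec = "nat set \<Rightarrow> complex"  \<comment> \<open>Fock vector: coefficients on occupation sets\<close>
type_synonym hvec = "nat set \<times> gauge \<Rightarrow> complex" \<comment> \<open>vector in F_L tensor edge spins\<close>

definition sites :: "nat \<Rightarrow> site set" where
  "sites L = {i. fst i < L \<and> snd i < L}"

definition sites_list :: "nat \<Rightarrow> site list" where
  "sites_list L = concat (map (\<lambda>i1. map (\<lambda>i2. (i1, i2)) [0..<L]) [0..<L])"

definition nbr :: "nat \<Rightarrow> site \<Rightarrow> nat \<Rightarrow> site" where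
  "nbr L i d = (if d = 0 then ((fst i + 1) mod L, snd i) else (fst i, (snd i + 1) mod L))"

definition edges :: "nat \<Rightarrow> edge set" where
  "edges L = {e. fst e \<in> sites L \<and> snd e < 2}"

definition incident :: "nat \<Rightarrow> site \<Rightarrow> edge set" where
  "incident L i = {e \<in> edges L. fst e = i \<or> nbr L (fst e) (snd e) = i}"

definition valid_gauge :: "nat \<Rightarrow> gauge \<Rightarrow> bool" where
  "valid_gauge L s \<longleftrightarrow> (\<forall>e \<in> edges L. s e = 1 \<or> s e = -1) \<and> (\<forall>e. e \<notin> edges L \<longrightarrow> s e = 1)"

definition plaquette :: "nat \<Rightarrow> gauge \<Rightarrow> site \<Rightarrow> int" where
  "plaquette L s i = s (i, 0) * s (nbr L i 0, 1) * s (nbr L i 1, 0) * s (i, 1)"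

text \<open>Fixed non-contractible cycles: C1 = horizontal row i2 = 0, C2 = vertical column i1 = 0.\<close>
definition hol1 :: "nat \<Rightarrow> gauge \<Rightarrow> int" where
  "hol1 L s = (\<Prod>k<L. s ((k, 0), 0))"

definition hol2 :: "nat \<Rightarrow> gauge \<Rightarrow> int" where
  "hol2 L s = (\<Prod>k<L. s ((0, k), 1))"

text \<open>Mode (i, eta) is encoded by a natural number < 2 L^2; eta = True means spin up.\<close>
definition mode :: "nat \<Rightarrow> site \<Rightarrow> bool \<Rightarrow> nat" where
  "mode L i eta = 2 * (L * fst i + snd i) + (if eta then 1 else 0)"

definition modes :: "nat \<Rightarrow> nat set" where
  "modes L = {..<2 * L * L}"

definition site_modes :: "nat \<Rightarrow> site set \<Rightarrow> nat set" where
  "site_modes L A = {mode L i eta | i eta. i \<in> A}"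

definition jw :: "nat set \<Rightarrow> nat \<Rightarrow> complex" where
  "jw n k = (-1) ^ card {l \<in> n. l < k}"

definition cre :: "nat \<Rightarrow> fvec \<Rightarrow> fvec" where
  "cre k \<psi> = (\<lambda>n. if k \<in> n then jw n k * \<psi> (n - {k}) else 0)"

definition ann :: "nat \<Rightarrow> fvec \<Rightarrow> fvec" where
  "ann k \<psi> = (\<lambda>n. if k \<notin> n then jw n k * \<psi> (insert k n) else 0)"

definition numop :: "nat \<Rightarrow> fvec \<Rightarrow> fvec" where
  "numop k \<psi> = cre k (ann k \<psi>)"

definition fvalid :: "nat \<Rightarrow> fvec \<Rightarrow> bool" where
  "fvalid L \<psi> \<longleftrightarrow> (\<forall>n. \<not> n \<subseteq> modes L \<longrightarrow> \<psi> n = 0)"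

definition shifted :: "nat \<Rightarrow> fvec \<Rightarrow> fvec" where
  "shifted k \<psi> = (\<lambda>n. numop k \<psi> n - \<psi> n / 2)"

definition Ham :: "nat \<Rightarrow> real \<Rightarrow> real \<Rightarrow> real \<Rightarrow> gauge \<Rightarrow> fvec \<Rightarrow> fvec" where
  "Ham L t m U s \<psi> = (\<lambda>n.
      - complex_of_real t * (\<Sum>e\<in>edges L. \<Sum>eta\<in>(UNIV::bool set).
          of_int (s e) *
            (cre (mode L (fst e) eta) (ann (mode L (nbr L (fst e) (snd e)) eta) \<psi>) n
           + cre (mode L (nbr L (fst e) (snd e)) eta) (ann (mode L (fst e) eta) \<psi>) n))
    + complex_of_real m * (\<Sum>i\<in>sites L. (-1) ^ (fst i + snd i) *
          (numop (mode L i True) \<psi> n + numop (mode L i False) \<psi> n))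
    + complex_of_real U * (\<Sum>i\<in>sites L.
          shifted (mode L i True) (shifted (mode L i False) \<psi>) n))"

definition is_eigvec :: "nat \<Rightarrow> (fvec \<Rightarrow> fvec) \<Rightarrow> real \<Rightarrow> fvec \<Rightarrow> bool" where
  "is_eigvec L H E \<psi> \<longleftrightarrow> fvalid L \<psi> \<and> \<psi> \<noteq> (\<lambda>_. 0) \<and> H \<psi> = (\<lambda>n. complex_of_real E * \<psi> n)"

definition unique_ground_state :: "nat \<Rightarrow> (fvec \<Rightarrow> fvec) \<Rightarrow> fvec \<Rightarrow> bool" where
  "unique_ground_state L H \<psi> \<longleftrightarrow>
     (\<exists>E. is_eigvec L H E \<psi> \<and> (\<forall>E' \<phi>. is_eigvec L H E' \<phi> \<longrightarrow> E \<le> E') \<and>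
          (\<forall>\<phi>. fvalid L \<phi> \<and> H \<phi> = (\<lambda>n. complex_of_real E * \<phi> n) \<longrightarrow> (\<exists>c. \<phi> = (\<lambda>n. c * \<psi> n) ) ) )"

definition hvalid :: "nat \<Rightarrow> hvec \<Rightarrow> bool" where
  "hvalid L \<Psi> \<longleftrightarrow> (\<forall>n s. \<Psi> (n, s) \<noteq> 0 \<longrightarrow> n \<subseteq> modes L \<and> valid_gauge L s)"

definition tensor :: "fvec \<Rightarrow> gauge \<Rightarrow> hvec" where
  "tensor \<psi> \<sigma> = (\<lambda>(n, s). if s = \<sigma> then \<psi> n else 0)"

definition flip :: "edge set \<Rightarrow> gauge \<Rightarrow> gauge" where
  "flip E s = (\<lambda>e. if e \<in> E then - s e else s e)"

text \<open>Q_i = A_i (-1)^{n_i}, A_i the product of sigma^x on the edges incident to i.\<close>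
definition Qop :: "nat \<Rightarrow> site \<Rightarrow> hvec \<Rightarrow> hvec" where
  "Qop L i \<Psi> = (\<lambda>(n, s). (-1) ^ card (n \<inter> site_modes L {i}) * \<Psi> (n, flip (incident L i) s))"

definition proj :: "nat \<Rightarrow> site \<Rightarrow> hvec \<Rightarrow> hvec" where
  "proj L i \<Psi> = (\<lambda>x. (\<Psi> x + Qop L i \<Psi> x) / 2)"

definition phys :: "nat \<Rightarrow> hvec \<Rightarrow> bool" where
  "phys L \<Psi> \<longleftrightarrow> hvalid L \<Psi> \<and> (\<forall>i \<in> sites L. Qop L i \<Psi> = \<Psi>)"

definition Omega :: "nat \<Rightarrow> gauge \<Rightarrow> fvec \<Rightarrow> hvec" where
  "Omega L \<sigma> \<psi> = foldr (proj L) (sites_list L) (tensor \<psi> \<sigma>)"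

definition gauge_transform :: "nat \<Rightarrow> site set \<Rightarrow> gauge \<Rightarrow> gauge" where
  "gauge_transform L \<Lambda> s = (\<lambda>e. s e * (-1) ^ card {i \<in> \<Lambda>. e \<in> incident L i})"

definition parity :: "nat \<Rightarrow> site set \<Rightarrow> fvec \<Rightarrow> fvec" where
  "parity L \<Lambda> \<psi> = (\<lambda>n. (-1) ^ card (n \<inter> site_modes L \<Lambda>) * \<psi> n)"

end

theory Submission
  imports Defs
begin

(* Each factor (1 + Q_i)/2 projects onto Q_i = 1 and the Q_i commute, which gives (1). A gauge
   transformation by A_Lambda turns psi tensor sigma into Q_Lambda (psi tensor sigma), where
   Q_Lambda is the product of the Q_i over Lambda, and every Q_i is absorbed by its projection,
   which gives (2). Expanding the product, Omega is the average of Q_Lambda (psi tensor sigma) over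
   all Lambda; its coefficient at (n, sigma) only receives contributions from the Lambda whose
   gauge transformation fixes sigma, and on the connected torus these are the empty set and the
   whole lattice. Hence that coefficient is (1 + (-1)^|n|) psi(n) / 2^(L^2), and (3) follows once
   psi is nonzero on some n of even size. The Hamiltonian commutes with the number of spin-up
   fermions and with the exchange of the two spins, so its unique ground state has a definite
   number of spin-up fermions, equal to the number of spin-down ones.
   Uniqueness of the ground state is a hypothesis of the statement, so the bound U0 is arbitrary. *)

lemma jw_mult_self [simp]: "jw n k * jw n k = 1"
  by (simp add: jw_def)

lemma jw_Diff_self [simp]: "jw (n - {k}) k = jw n k"
  unfolding jw_def by (rule arg_cong[where f = "\<lambda>A. (-1) ^ card A"]) auto

lemma jw_Suc: "jw n (Suc k) = (if k \<in> n then - jw n k else jw n k)"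
proof -
  have "{l \<in> n. l < Suc k} = {l \<in> n. l < k} \<union> ({k} \<inter> n)" by auto
  then show ?thesis
    unfolding jw_def by (cases "k \<in> n") (simp_all add: card_Un_disjoint)
qed

lemma numop_apply: "numop k \<psi> n = (if k \<in> n then \<psi> n else 0)"
  by (auto simp: numop_def cre_def ann_def insert_absorb mult.assoc[symmetric])

lemma shifted_apply: "shifted k \<psi> n = ((if k \<in> n then 1 else 0) - 1/2) * \<psi> n"
  by (simp add: shifted_def numop_apply algebra_simps)

section \<open>Exchange of the two spins\<close>

definition spin_partner :: "nat \<Rightarrow> nat" where
  "spin_partner k = (if even k then Suc k else k - 1)"

lemma spin_partner_spin_partner [simp]: "spin_partner (spin_partner k) = k"
  by (auto simp: spin_partner_def)

lemma inj_spin_partner: "inj spin_partner"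
  by (metis injI spin_partner_spin_partner)

lemma image_spin_partner_image [simp]: "spin_partner ` spin_partner ` n = n"
  by (simp add: image_image)

lemma mem_image_spin_partner_iff: "k \<in> spin_partner ` n \<longleftrightarrow> spin_partner k \<in> n"
  by (metis image_iff spin_partner_spin_partner)

lemma spin_partner_less_iff: "spin_partner k < 2 * q \<longleftrightarrow> k < 2 * q"
  by (auto simp: spin_partner_def; presburger)

lemma odd_spin_partner_iff: "odd (spin_partner k) \<longleftrightarrow> even k"
  by (auto simp: spin_partner_def; presburger)

lemma odd_mode_iff: "odd (mode L i \<eta>) \<longleftrightarrow> \<eta>"
  by (simp add: mode_def)

lemma spin_partner_mode: "spin_partner (mode L i \<eta>) = mode L i (\<not> \<eta>)"
  by (simp add: spin_partner_def mode_def)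

lemma jw_image_spin_partner_even: "jw (spin_partner ` n) (2 * p) = jw n (2 * p)"
proof -
  have "{l \<in> spin_partner ` n. l < 2 * p} = spin_partner ` {l \<in> n. l < 2 * p}"
    using spin_partner_less_iff by (auto simp: image_iff)
  then show ?thesis
    unfolding jw_def by (simp add: card_image inj_on_subset[OF inj_spin_partner])
qed

definition double_occ :: "nat set \<Rightarrow> nat" where
  "double_occ n = card {l \<in> n. even l \<and> Suc l \<in> n}"

lemma double_occ_insert:
  assumes "finite n" "k \<notin> n"
  shows "double_occ (insert k n) = double_occ n + (if spin_partner k \<in> n then 1 else 0)"
proof -
  let ?D = "\<lambda>n. {l \<in> n. even l \<and> Suc l \<in> n}"
  define p where "p = 2 * (k div 2)"
  have "?D (insert k n) = (if spin_partner k \<in> n then insert p (?D n) else ?D n)"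
    using assms(2) by (auto simp: p_def spin_partner_def; presburger)
  moreover have "k = p \<or> k = Suc p"
    unfolding p_def by presburger
  then have "p \<notin> ?D n"
    using assms(2) by auto
  ultimately show ?thesis
    using assms(1) unfolding double_occ_def by simp
qed

lemma jw_spin_partner_insert:
  assumes "finite n" "k \<notin> n"
  shows "(-1) ^ double_occ (insert k n) * jw (spin_partner ` n) (spin_partner k)
           = jw n k * (-1) ^ double_occ n"
proof (cases "even k")
  case True
  then obtain p where p: "k = 2 * p" by blast
  then have "spin_partner k = Suc (2 * p)" by (simp add: spin_partner_def)
  moreover have "2 * p \<in> spin_partner ` n \<longleftrightarrow> spin_partner k \<in> n"
    unfolding mem_image_spin_partner_iff using p by (simp add: spin_partner_def)
  ultimately show ?thesis
    using double_occ_insert[OF assms] p by (simp add: jw_Suc jw_image_spin_partner_even)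
next
  case False
  then obtain p where p: "k = Suc (2 * p)" by (metis oddE Suc_eq_plus1)
  then have "spin_partner k = 2 * p" by (simp add: spin_partner_def)
  then show ?thesis
    using double_occ_insert[OF assms] p by (simp add: jw_Suc jw_image_spin_partner_even)
qed

lemma mult_sign_swap:
  fixes a b x y :: "'a::comm_ring_1"
  assumes "a * a = 1" "b * b = 1" "a * x = y * b"
  shows "b * x = y * a"
proof -
  have "b * x = b * (a * a) * x" using assms(1) by simp
  also have "\<dots> = b * (a * x) * a" by (simp only: ac_simps)
  also have "\<dots> = y * (b * b) * a" unfolding assms(3) by (simp only: ac_simps)
  finally show ?thesis using assms(2) by simp
qed

(* The Jordan-Wigner sign of exchanging the two modes of every site; the value 0 on infinite
   occupation sets, where card is junk, keeps spin_flip_cre valid there. *)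
definition spin_flip_sign :: "nat set \<Rightarrow> complex" where
  "spin_flip_sign n = (if finite n then (-1) ^ double_occ n else 0)"

definition spin_flip :: "fvec \<Rightarrow> fvec" where
  "spin_flip \<phi> = (\<lambda>n. spin_flip_sign n * \<phi> (spin_partner ` n))"

lemma image_spin_partner_Diff: "spin_partner ` (n - {spin_partner k}) = spin_partner ` n - {k}"
  by (auto simp: mem_image_spin_partner_iff)

lemma spin_flip_cre: "spin_flip (cre k \<phi>) = cre (spin_partner k) (spin_flip \<phi>)"
proof (rule ext)
  fix n
  show "spin_flip (cre k \<phi>) n = cre (spin_partner k) (spin_flip \<phi>) n"
  proof (cases "finite n \<and> spin_partner k \<in> n")
    case True
    let ?m = "n - {spin_partner k}"
    have "insert (spin_partner k) ?m = n" using True by auto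
    then have "(-1) ^ double_occ n * jw (spin_partner ` n) k = jw n (spin_partner k) * (-1) ^ double_occ ?m"
      using jw_spin_partner_insert[of ?m "spin_partner k"] True by (simp add: image_spin_partner_Diff)
    then show ?thesis
      using True by (simp add: spin_flip_def spin_flip_sign_def cre_def mem_image_spin_partner_iff
          image_spin_partner_Diff mult.assoc)
  next
    case False
    then show ?thesis
      by (auto simp: spin_flip_def spin_flip_sign_def cre_def mem_image_spin_partner_iff)
  qed
qed

lemma spin_flip_ann: "spin_flip (ann k \<phi>) = ann (spin_partner k) (spin_flip \<phi>)"
proof (rule ext)
  fix n
  show "spin_flip (ann k \<phi>) n = ann (spin_partner k) (spin_flip \<phi>) n"
  proof (cases "finite n \<and> spin_partner k \<notin> n")
    case True
    have "(-1) ^ double_occ (insert (spin_partner k) n) * jw (spin_partner ` n) k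
            = jw n (spin_partner k) * (-1) ^ double_occ n"
      using jw_spin_partner_insert[of n "spin_partner k"] True by simp
    then have "(-1) ^ double_occ n * jw (spin_partner ` n) k
                 = jw n (spin_partner k) * (-1) ^ double_occ (insert (spin_partner k) n)"
      by (rule mult_sign_swap[OF minus_one_mult_self minus_one_mult_self])
    then show ?thesis
      using True by (simp add: spin_flip_def spin_flip_sign_def ann_def mem_image_spin_partner_iff mult.assoc)
  next
    case False
    then show ?thesis
      by (auto simp: spin_flip_def spin_flip_sign_def ann_def mem_image_spin_partner_iff)
  qed
qed

section \<open>Symmetries of the Hamiltonian\<close>

definition hopping :: "nat \<Rightarrow> gauge \<Rightarrow> fvec \<Rightarrow> fvec" where
  "hopping L s \<psi> = (\<lambda>n. \<Sum>e\<in>edges L. \<Sum>\<eta>\<in>(UNIV::bool set). of_int (s e) *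
      (cre (mode L (fst e) \<eta>) (ann (mode L (nbr L (fst e) (snd e)) \<eta>) \<psi>) n
     + cre (mode L (nbr L (fst e) (snd e)) \<eta>) (ann (mode L (fst e) \<eta>) \<psi>) n))"

definition staggered_density :: "nat \<Rightarrow> fvec \<Rightarrow> fvec" where
  "staggered_density L \<psi> = (\<lambda>n. \<Sum>i\<in>sites L. (-1) ^ (fst i + snd i) *
      (\<Sum>\<eta>\<in>(UNIV::bool set). numop (mode L i \<eta>) \<psi> n))"

definition hubbard :: "nat \<Rightarrow> fvec \<Rightarrow> fvec" where
  "hubbard L \<psi> = (\<lambda>n. \<Sum>i\<in>sites L. shifted (mode L i True) (shifted (mode L i False) \<psi>) n)"

lemma Ham_eq:
  "Ham L t m U s \<psi> n = - of_real t * hopping L s \<psi> n + of_real m * staggered_density L \<psi> n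
     + of_real U * hubbard L \<psi> n"
  by (simp add: Ham_def hopping_def staggered_density_def hubbard_def UNIV_bool add.commute)

lemma bij_Not: "bij Not"
  by (rule bijI') auto

lemma hopping_transform:
  assumes "bij \<pi>"
    and hop: "\<And>i j \<eta>. w * cre (mode L i \<eta>) (ann (mode L j \<eta>) \<psi>) n'
                      = cre (mode L i (\<pi> \<eta>)) (ann (mode L j (\<pi> \<eta>)) \<phi>) n"
  shows "w * hopping L s \<psi> n' = hopping L s \<phi> n"
proof -
  have "w * hopping L s \<psi> n' = (\<Sum>e\<in>edges L. \<Sum>\<eta>\<in>UNIV. of_int (s e) *
      (cre (mode L (fst e) (\<pi> \<eta>)) (ann (mode L (nbr L (fst e) (snd e)) (\<pi> \<eta>)) \<phi>) n
     + cre (mode L (nbr L (fst e) (snd e)) (\<pi> \<eta>)) (ann (mode L (fst e) (\<pi> \<eta>)) \<phi>) n))"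
    unfolding hopping_def by (simp add: sum_distrib_left distrib_left mult.left_commute[of w] hop)
  also have "\<dots> = hopping L s \<phi> n"
    unfolding hopping_def by (intro sum.cong refl sum.reindex_bij_betw[OF assms(1)])
  finally show ?thesis .
qed

lemma numop_transform:
  assumes "\<phi> n = w * \<psi> n'" and "w \<noteq> 0 \<Longrightarrow> k' \<in> n' \<longleftrightarrow> k \<in> n"
  shows "w * numop k' \<psi> n' = numop k \<phi> n"
  using assms by (cases "w = 0") (auto simp: numop_apply)

lemma staggered_density_transform:
  assumes "bij \<pi>" and "\<phi> n = w * \<psi> n'"
    and occ: "\<And>i \<eta>. w \<noteq> 0 \<Longrightarrow> mode L i \<eta> \<in> n' \<longleftrightarrow> mode L i (\<pi> \<eta>) \<in> n"
  shows "w * staggered_density L \<psi> n' = staggered_density L \<phi> n"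
proof -
  have num: "w * numop (mode L i \<eta>) \<psi> n' = numop (mode L i (\<pi> \<eta>)) \<phi> n" for i \<eta>
    by (rule numop_transform[where \<phi> = \<phi> and \<psi> = \<psi>, OF assms(2) occ])
  have "w * staggered_density L \<psi> n' = (\<Sum>i\<in>sites L. (-1) ^ (fst i + snd i) *
      (\<Sum>\<eta>\<in>UNIV. numop (mode L i (\<pi> \<eta>)) \<phi> n))"
    unfolding staggered_density_def
    by (simp add: sum_distrib_left mult.left_commute[of w] num)
  also have "\<dots> = staggered_density L \<phi> n"
    unfolding staggered_density_def
    by (intro sum.cong refl arg_cong2[where f = times] sum.reindex_bij_betw[OF assms(1)])
  finally show ?thesis .
qed

lemma hubbard_transform:
  assumes "bij \<pi>" and "\<phi> n = w * \<psi> n'"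
    and occ: "\<And>i \<eta>. w \<noteq> 0 \<Longrightarrow> mode L i \<eta> \<in> n' \<longleftrightarrow> mode L i (\<pi> \<eta>) \<in> n"
  shows "w * hubbard L \<psi> n' = hubbard L \<phi> n"
proof -
  have \<pi>: "\<pi> False = (\<not> \<pi> True)"
    using bij_is_inj[OF assms(1)] by (metis (full_types) injD)
  have "w * shifted (mode L i True) (shifted (mode L i False) \<psi>) n'
          = shifted (mode L i True) (shifted (mode L i False) \<phi>) n" for i
  proof (cases "w = 0")
    case True
    then show ?thesis using assms(2) by (simp add: shifted_apply)
  next
    case False
    then show ?thesis
      using occ[OF False, of i True] occ[OF False, of i False] assms(2) \<pi>
      by (cases "\<pi> True") (simp_all add: shifted_apply ac_simps)
  qed
  then show ?thesis by (simp add: hubbard_def sum_distrib_left)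
qed

lemma Ham_transform:
  assumes "bij \<pi>" and "\<phi> n = w * \<psi> n'"
    and "\<And>i \<eta>. w \<noteq> 0 \<Longrightarrow> mode L i \<eta> \<in> n' \<longleftrightarrow> mode L i (\<pi> \<eta>) \<in> n"
    and "\<And>i j \<eta>. w * cre (mode L i \<eta>) (ann (mode L j \<eta>) \<psi>) n'
                  = cre (mode L i (\<pi> \<eta>)) (ann (mode L j (\<pi> \<eta>)) \<phi>) n"
  shows "w * Ham L t m U s \<psi> n' = Ham L t m U s \<phi> n"
proof -
  have "w * hopping L s \<psi> n' = hopping L s \<phi> n"
    by (rule hopping_transform[OF assms(1)]) (rule assms(4))
  moreover have "w * staggered_density L \<psi> n' = staggered_density L \<phi> n"
    by (rule staggered_density_transform[where \<phi> = \<phi> and \<psi> = \<psi>, OF assms(1,2) assms(3)])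
  moreover have "w * hubbard L \<psi> n' = hubbard L \<phi> n"
    by (rule hubbard_transform[where \<phi> = \<phi> and \<psi> = \<psi>, OF assms(1,2) assms(3)])
  ultimately show ?thesis
    unfolding Ham_eq distrib_left mult_minus_left mult_minus_right mult.left_commute[of w]
    by simp
qed

definition num_up :: "nat set \<Rightarrow> nat" where
  "num_up n = card {l \<in> n. odd l}"

definition num_up_proj :: "nat \<Rightarrow> fvec \<Rightarrow> fvec" where
  "num_up_proj a \<psi> = (\<lambda>n. (if num_up n = a then 1 else 0) * \<psi> n)"

lemma card_insert_swap: "x \<notin> B \<Longrightarrow> y \<notin> B \<Longrightarrow> card (insert y B) = card (insert x B)"
  by (cases "finite B") simp_all

lemma num_up_hop:
  assumes "x \<in> n" "y \<notin> n - {x}" "odd x \<longleftrightarrow> odd y"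
  shows "num_up (insert y (n - {x})) = num_up n"
proof (cases "odd x")
  case True
  let ?A = "{l \<in> n. odd l}"
  have "{l \<in> insert y (n - {x}). odd l} = insert y (?A - {x})"
    using True assms(3) by auto
  also have "card \<dots> = card (insert x (?A - {x}))"
    using assms(2) by (intro card_insert_swap) auto
  also have "insert x (?A - {x}) = ?A"
    using True assms(1) by auto
  finally show ?thesis unfolding num_up_def .
next
  case False
  then have "{l \<in> insert y (n - {x}). odd l} = {l \<in> n. odd l}"
    using assms(3) by auto
  then show ?thesis unfolding num_up_def by simp
qed

lemma num_up_proj_hop:
  "(if num_up n = a then 1 else 0) * cre (mode L i \<eta>) (ann (mode L j \<eta>) \<psi>) n
     = cre (mode L i \<eta>) (ann (mode L j \<eta>) (num_up_proj a \<psi>)) n"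
  using num_up_hop[of "mode L i \<eta>" n "mode L j \<eta>"]
  by (auto simp: cre_def ann_def num_up_proj_def odd_mode_iff)

lemma Ham_num_up_proj: "Ham L t m U s (num_up_proj a \<psi>) = num_up_proj a (Ham L t m U s \<psi>)"
proof (rule ext)
  fix n
  show "Ham L t m U s (num_up_proj a \<psi>) n = num_up_proj a (Ham L t m U s \<psi>) n"
    unfolding num_up_proj_def
    by (rule Ham_transform[where \<pi> = id, symmetric]) (simp_all add: num_up_proj_def num_up_proj_hop)
qed

lemma Ham_spin_flip: "Ham L t m U s (spin_flip \<psi>) = spin_flip (Ham L t m U s \<psi>)"
proof (rule ext)
  fix n
  have hop: "spin_flip_sign n * cre x (ann y \<psi>) (spin_partner ` n)
               = cre (spin_partner x) (ann (spin_partner y) (spin_flip \<psi>)) n" for x y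
  proof -
    have "spin_flip_sign n * cre x (ann y \<psi>) (spin_partner ` n) = spin_flip (cre x (ann y \<psi>)) n"
      by (simp only: spin_flip_def)
    then show ?thesis by (simp only: spin_flip_cre spin_flip_ann)
  qed
  show "Ham L t m U s (spin_flip \<psi>) n = spin_flip (Ham L t m U s \<psi>) n"
    unfolding spin_flip_def[of "Ham L t m U s \<psi>"]
    by (rule Ham_transform[OF bij_Not, symmetric])
       (simp_all add: spin_flip_def hop spin_partner_mode mem_image_spin_partner_iff)
qed

section \<open>Even particle number in the ground state\<close>

lemma unique_ground_state_symmetry:
  assumes "unique_ground_state L H \<psi>"
    and "fvalid L (T \<psi>)" and "H (T \<psi>) = T (H \<psi>)"
    and "\<And>c f. T (\<lambda>n. c * f n) = (\<lambda>n. c * T f n)"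
  shows "\<exists>c. T \<psi> = (\<lambda>n. c * \<psi> n)"
proof -
  obtain E where eig: "H \<psi> = (\<lambda>n. complex_of_real E * \<psi> n)"
    and uniq: "\<And>\<phi>. fvalid L \<phi> \<Longrightarrow> H \<phi> = (\<lambda>n. complex_of_real E * \<phi> n)
                 \<Longrightarrow> \<exists>c. \<phi> = (\<lambda>n. c * \<psi> n)"
    using assms(1) unfolding unique_ground_state_def is_eigvec_def by blast
  have "H (T \<psi>) = (\<lambda>n. complex_of_real E * T \<psi> n)"
    using assms(3,4) eig by simp
  then show ?thesis using uniq assms(2) by blast
qed

lemma fvalid_num_up_proj: "fvalid L \<psi> \<Longrightarrow> fvalid L (num_up_proj a \<psi>)"
  by (simp add: fvalid_def num_up_proj_def)

lemma image_spin_partner_subset_modes_iff: "spin_partner ` n \<subseteq> modes L \<longleftrightarrow> n \<subseteq> modes L"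
proof -
  have "spin_partner k < 2 * L * L \<longleftrightarrow> k < 2 * L * L" for k
    using spin_partner_less_iff[of k "L * L"] by (simp add: mult.assoc)
  then show ?thesis by (auto simp: modes_def)
qed

lemma fvalid_spin_flip: "fvalid L \<psi> \<Longrightarrow> fvalid L (spin_flip \<psi>)"
  by (simp add: fvalid_def spin_flip_def image_spin_partner_subset_modes_iff)

lemma num_up_image_spin_partner: "num_up (spin_partner ` n) = card {l \<in> n. even l}"
proof -
  have "{l \<in> spin_partner ` n. odd l} = spin_partner ` {l \<in> n. even l}"
    using odd_spin_partner_iff by (auto simp: image_iff)
  then show ?thesis
    unfolding num_up_def by (simp add: card_image inj_on_subset[OF inj_spin_partner])
qed

lemma card_eq_num_up_add: "finite n \<Longrightarrow> card n = num_up n + num_up (spin_partner ` n)"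
proof -
  assume "finite n"
  moreover have "n = {l \<in> n. odd l} \<union> {l \<in> n. even l}" by auto
  ultimately have "card n = card {l \<in> n. odd l} + card {l \<in> n. even l}"
    by (metis (no_types, lifting) card_Un_disjoint finite_Un disjoint_iff mem_Collect_eq)
  then show ?thesis unfolding num_up_image_spin_partner by (simp add: num_up_def)
qed

lemma ground_state_num_up:
  assumes "unique_ground_state L (Ham L t m U s) \<psi>" "\<psi> n0 \<noteq> 0" "\<psi> n \<noteq> 0"
  shows "num_up n = num_up n0"
proof -
  have "fvalid L \<psi>" using assms(1) by (simp add: unique_ground_state_def is_eigvec_def)
  then obtain c where c: "num_up_proj (num_up n0) \<psi> = (\<lambda>n. c * \<psi> n)"
    using unique_ground_state_symmetry[OF assms(1)]
    by (metis (no_types) fvalid_num_up_proj Ham_num_up_proj num_up_proj_def mult.left_commute)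
  have "c = 1" using fun_cong[OF c, of n0] assms(2) by (simp add: num_up_proj_def)
  then show ?thesis using fun_cong[OF c, of n] assms(3) by (simp add: num_up_proj_def split: if_splits)
qed

lemma ground_state_spin_flip:
  assumes "unique_ground_state L (Ham L t m U s) \<psi>" "\<psi> n \<noteq> 0" "finite n"
  shows "\<psi> (spin_partner ` n) \<noteq> 0"
proof -
  have "fvalid L \<psi>" using assms(1) by (simp add: unique_ground_state_def is_eigvec_def)
  then obtain c where c: "spin_flip \<psi> = (\<lambda>n. c * \<psi> n)"
    using unique_ground_state_symmetry[OF assms(1)]
    by (metis (no_types) fvalid_spin_flip Ham_spin_flip spin_flip_def mult.left_commute)
  have "spin_flip \<psi> (spin_partner ` n) \<noteq> 0"
    using assms(2,3) by (simp add: spin_flip_def spin_flip_sign_def)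
  then show ?thesis using fun_cong[OF c, of "spin_partner ` n"] by auto
qed

lemma unique_ground_state_even_support:
  assumes "unique_ground_state L (Ham L t m U s) \<psi>"
  shows "\<exists>n. \<psi> n \<noteq> 0 \<and> n \<subseteq> modes L \<and> even (card n)"
proof -
  have "fvalid L \<psi>" and "\<psi> \<noteq> (\<lambda>_. 0)"
    using assms by (auto simp: unique_ground_state_def is_eigvec_def)
  then obtain n where n: "\<psi> n \<noteq> 0" by auto
  moreover have "n \<subseteq> modes L" using n \<open>fvalid L \<psi>\<close> by (meson fvalid_def)
  moreover have "finite n" using \<open>n \<subseteq> modes L\<close> finite_subset by (auto simp: modes_def)
  moreover have "num_up (spin_partner ` n) = num_up n"
    using ground_state_num_up[OF assms n ground_state_spin_flip[OF assms n]] \<open>finite n\<close> by simp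
  ultimately show ?thesis by (metis card_eq_num_up_add even_add)
qed

section \<open>Gauss law operators\<close>

lemma Qop_apply: "Qop L i \<Psi> (n, s) = (-1) ^ card (n \<inter> site_modes L {i}) * \<Psi> (n, flip (incident L i) s)"
  by (simp add: Qop_def)

lemma flip_flip [simp]: "flip A (flip A s) = s"
  by (auto simp: flip_def)

lemma flip_commute: "flip A (flip B s) = flip B (flip A s)"
  by (auto simp: flip_def)

lemma Qop_Qop [simp]: "Qop L i (Qop L i \<Psi>) = \<Psi>"
  by (rule ext) (auto simp: Qop_apply mult.assoc[symmetric])

lemma Qop_commute: "Qop L i (Qop L j \<Psi>) = Qop L j (Qop L i \<Psi>)"
  by (rule ext) (auto simp: Qop_apply flip_commute ac_simps)

lemma Qop_proj: "Qop L i (proj L j \<Psi>) = proj L j (Qop L i \<Psi>)"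
proof (rule ext, clarify)
  fix n s
  have "Qop L i (proj L j \<Psi>) (n, s) = (Qop L i \<Psi> (n, s) + Qop L i (Qop L j \<Psi>) (n, s)) / 2"
    by (simp only: Qop_apply proj_def) (simp add: algebra_simps add_divide_distrib)
  then show "Qop L i (proj L j \<Psi>) (n, s) = proj L j (Qop L i \<Psi>) (n, s)"
    by (simp add: proj_def Qop_commute)
qed

lemma Qop_proj_self: "Qop L i (proj L i \<Psi>) = proj L i \<Psi>"
  by (simp add: Qop_proj) (simp add: proj_def add.commute)

lemma Qop_foldr_proj: "Qop L i (foldr (proj L) xs \<Psi>) = foldr (proj L) xs (Qop L i \<Psi>)"
  by (induction xs) (simp_all add: Qop_proj)

lemma Qop_foldr_proj_mem: "i \<in> set xs \<Longrightarrow> Qop L i (foldr (proj L) xs \<Psi>) = foldr (proj L) xs \<Psi>"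
proof (induction xs)
  case (Cons j xs)
  then show ?case by (cases "i = j") (simp add: Qop_proj_self, simp add: Qop_proj)
qed simp

(* Q_Lambda, the product of the Q_i over i in Lambda (see Qop_gauss_prod) *)
definition gauss_prod :: "nat \<Rightarrow> site set \<Rightarrow> hvec \<Rightarrow> hvec" where
  "gauss_prod L \<Lambda> \<Psi> =
     (\<lambda>(n, s). (-1) ^ card (n \<inter> site_modes L \<Lambda>) * \<Psi> (n, gauge_transform L \<Lambda> s))"

lemma gauss_prod_apply:
  "gauss_prod L \<Lambda> \<Psi> (n, s) = (-1) ^ card (n \<inter> site_modes L \<Lambda>) * \<Psi> (n, gauge_transform L \<Lambda> s)"
  by (simp add: gauss_prod_def)

lemma gauge_transform_empty [simp]: "gauge_transform L {} s = s"
  by (simp add: gauge_transform_def)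

lemma site_modes_empty [simp]: "site_modes L {} = {}"
  by (simp add: site_modes_def)

lemma gauss_prod_empty [simp]: "gauss_prod L {} \<Psi> = \<Psi>"
  by (rule ext) (auto simp: gauss_prod_def)

lemma mode_inj:
  assumes "i \<in> sites L" "j \<in> sites L" "mode L i a = mode L j b"
  shows "i = j \<and> a = b"
proof -
  have "a = b" using assms(3) odd_mode_iff by metis
  then have e: "L * fst i + snd i = L * fst j + snd j" using assms(3) by (simp add: mode_def)
  have "snd i < L" "snd j < L" using assms(1,2) by (auto simp: sites_def)
  then have "snd i = snd j" using arg_cong[OF e, of "\<lambda>x. x mod L"] by simp
  moreover have "fst i = fst j" using e \<open>snd i < L\<close> calculation by simp
  ultimately show ?thesis using \<open>a = b\<close> by (simp add: prod_eq_iff)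
qed

lemma site_modes_eq_image: "site_modes L A = (\<lambda>(i, \<eta>). mode L i \<eta>) ` (A \<times> UNIV)"
  by (auto simp: site_modes_def)

lemma card_Int_site_modes_insert:
  assumes "finite \<Lambda>" "i \<notin> \<Lambda>" "insert i \<Lambda> \<subseteq> sites L"
  shows "card (n \<inter> site_modes L (insert i \<Lambda>))
           = card (n \<inter> site_modes L {i}) + card (n \<inter> site_modes L \<Lambda>)"
proof -
  have "n \<inter> site_modes L (insert i \<Lambda>) = (n \<inter> site_modes L {i}) \<union> (n \<inter> site_modes L \<Lambda>)"
    unfolding site_modes_eq_image by auto
  moreover have "site_modes L {i} \<inter> site_modes L \<Lambda> = {}"
    using assms mode_inj by (auto simp: site_modes_def) blast
  moreover have "finite (site_modes L A)" if "finite A" for A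
    using that unfolding site_modes_eq_image by simp
  ultimately show ?thesis
    using assms(1) by (simp add: card_Un_disjoint disjoint_iff)
qed

lemma gauge_transform_flip_incident:
  assumes "finite \<Lambda>" "i \<notin> \<Lambda>"
  shows "gauge_transform L \<Lambda> (flip (incident L i) s) = gauge_transform L (insert i \<Lambda>) s"
proof (rule ext)
  fix e
  have "{j \<in> insert i \<Lambda>. e \<in> incident L j}
          = (if e \<in> incident L i then insert i {j \<in> \<Lambda>. e \<in> incident L j} else {j \<in> \<Lambda>. e \<in> incident L j})"
    by auto
  then show "gauge_transform L \<Lambda> (flip (incident L i) s) e = gauge_transform L (insert i \<Lambda>) s e"
    using assms by (simp add: gauge_transform_def flip_def)
qed

lemma Qop_gauss_prod:
  assumes "finite \<Lambda>" "i \<notin> \<Lambda>" "insert i \<Lambda> \<subseteq> sites L"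
  shows "Qop L i (gauss_prod L \<Lambda> \<Psi>) = gauss_prod L (insert i \<Lambda>) \<Psi>"
  by (rule ext)
     (auto simp: Qop_apply gauss_prod_apply gauge_transform_flip_incident[OF assms(1,2)]
        card_Int_site_modes_insert[OF assms] power_add)

lemma foldr_proj_gauss_prod:
  assumes "finite \<Lambda>" "\<Lambda> \<subseteq> set xs" "\<Lambda> \<subseteq> sites L"
  shows "foldr (proj L) xs (gauss_prod L \<Lambda> \<Psi>) = foldr (proj L) xs \<Psi>"
  using assms
proof (induction \<Lambda> rule: finite_induct)
  case (insert i \<Lambda>)
  then have "gauss_prod L (insert i \<Lambda>) \<Psi> = Qop L i (gauss_prod L \<Lambda> \<Psi>)"
    by (simp add: Qop_gauss_prod)
  then show ?case
    using insert by (simp flip: Qop_foldr_proj add: Qop_foldr_proj_mem)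
qed simp

lemma gauge_transform_gauge_transform [simp]:
  "gauge_transform L \<Lambda> (gauge_transform L \<Lambda> s) = s"
  by (rule ext) (simp add: gauge_transform_def mult.assoc)

lemma tensor_gauge_transform_parity:
  "tensor (parity L \<Lambda> \<psi>) (gauge_transform L \<Lambda> \<sigma>) = gauss_prod L \<Lambda> (tensor \<psi> \<sigma>)"
proof (rule ext, clarify)
  fix n s
  have "gauge_transform L \<Lambda> s = \<sigma> \<longleftrightarrow> s = gauge_transform L \<Lambda> \<sigma>" by auto
  then show "tensor (parity L \<Lambda> \<psi>) (gauge_transform L \<Lambda> \<sigma>) (n, s)
               = gauss_prod L \<Lambda> (tensor \<psi> \<sigma>) (n, s)"
    by (simp add: tensor_def parity_def gauss_prod_apply)
qed

lemma foldr_proj_eq_average: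
  assumes "distinct xs" "set xs \<subseteq> sites L"
  shows "foldr (proj L) xs \<Psi> = (\<lambda>x. (\<Sum>\<Lambda>\<in>Pow (set xs). gauss_prod L \<Lambda> \<Psi> x) / 2 ^ length xs)"
  using assms
proof (induction xs)
  case (Cons i xs)
  let ?S = "\<lambda>x. \<Sum>\<Lambda>\<in>Pow (set xs). gauss_prod L \<Lambda> \<Psi> x"
  let ?S' = "\<lambda>x. \<Sum>\<Lambda>\<in>Pow (set xs). gauss_prod L (insert i \<Lambda>) \<Psi> x"
  have i: "i \<notin> set xs" "insert i (set xs) \<subseteq> sites L" using Cons.prems by auto
  have Q: "Qop L i (\<lambda>x. ?S x / 2 ^ length xs) = (\<lambda>x. ?S' x / 2 ^ length xs)"
  proof (rule ext, clarify)
    fix n s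
    have "Qop L i (gauss_prod L \<Lambda> \<Psi>) = gauss_prod L (insert i \<Lambda>) \<Psi>" if "\<Lambda> \<subseteq> set xs" for \<Lambda>
      using that i by (intro Qop_gauss_prod) (auto intro: finite_subset)
    then show "Qop L i (\<lambda>x. ?S x / 2 ^ length xs) (n, s) = ?S' (n, s) / 2 ^ length xs"
      by (simp add: Qop_apply sum_distrib_left flip: Qop_apply[of L i])
  qed
  have "(\<Sum>\<Lambda>\<in>Pow (set (i # xs)). gauss_prod L \<Lambda> \<Psi> x) = ?S x + ?S' x" for x
  proof -
    have "inj_on (insert i) (Pow (set xs))"
      using i(1) unfolding inj_on_def by (metis PowD insert_ident subset_iff)
    moreover have "Pow (set xs) \<inter> insert i ` Pow (set xs) = {}" using i(1) by auto
    ultimately show ?thesis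
      by (simp add: Pow_insert sum.union_disjoint sum.reindex)
  qed
  then show ?case
    using Cons by (simp add: proj_def Q add_divide_distrib mult.commute)
qed simp

section \<open>Gauge transformations on the torus\<close>

lemma set_sites_list [simp]: "set (sites_list L) = sites L"
  by (auto simp: sites_list_def sites_def)

lemma distinct_sites_list: "distinct (sites_list L)"
  unfolding sites_list_def by (rule distinct_concat) (auto simp: distinct_map inj_on_def)

lemma finite_sites: "finite (sites L)"
proof -
  have "sites L = {..<L} \<times> {..<L}" by (auto simp: sites_def)
  then show ?thesis by simp
qed

lemma nbr_in_sites: "0 < L \<Longrightarrow> i \<in> sites L \<Longrightarrow> nbr L i d \<in> sites L"
  by (auto simp: nbr_def sites_def)

lemma nbr_neq: "2 \<le> L \<Longrightarrow> i \<in> sites L \<Longrightarrow> nbr L i d \<noteq> i"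
proof -
  have "Suc a mod L \<noteq> a" if "2 \<le> L" "a < L" for a
    using that by (cases "Suc a = L") auto
  then show "2 \<le> L \<Longrightarrow> i \<in> sites L \<Longrightarrow> nbr L i d \<noteq> i"
    by (auto simp: nbr_def sites_def prod_eq_iff)
qed

lemma sites_incident_to_edge:
  "e \<in> edges L \<Longrightarrow> {j \<in> \<Lambda>. e \<in> incident L j} = \<Lambda> \<inter> {fst e, nbr L (fst e) (snd e)}"
  by (auto simp: incident_def)

lemma gauge_transform_sites:
  assumes "2 \<le> L"
  shows "gauge_transform L (sites L) s = s"
proof (rule ext)
  fix e
  show "gauge_transform L (sites L) s e = s e"
  proof (cases "e \<in> edges L")
    case True
    then have "fst e \<in> sites L" by (simp add: edges_def)
    then have "{j \<in> sites L. e \<in> incident L j} = {fst e, nbr L (fst e) (snd e)}"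
      and "nbr L (fst e) (snd e) \<noteq> fst e"
      using sites_incident_to_edge[OF True] nbr_in_sites nbr_neq assms by auto
    then show ?thesis by (simp add: gauge_transform_def)
  next
    case False
    then have "{j \<in> sites L. e \<in> incident L j} = {}" by (auto simp: incident_def)
    then show ?thesis unfolding gauge_transform_def by (metis card.empty mult_1_right power_0)
  qed
qed

lemma gauge_transform_fixed_nbr_iff:
  assumes "valid_gauge L \<sigma>" "2 \<le> L" "gauge_transform L \<Lambda> \<sigma> = \<sigma>" "i \<in> sites L" "d < 2"
  shows "i \<in> \<Lambda> \<longleftrightarrow> nbr L i d \<in> \<Lambda>"
proof (rule ccontr)
  assume ne: "\<not> (i \<in> \<Lambda> \<longleftrightarrow> nbr L i d \<in> \<Lambda>)"
  have e: "(i, d) \<in> edges L" using assms(4,5) by (simp add: edges_def)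
  then have "\<sigma> (i, d) \<noteq> 0" using assms(1) by (auto simp: valid_gauge_def)
  moreover have "{j \<in> \<Lambda>. (i, d) \<in> incident L j} = {i} \<or> {j \<in> \<Lambda>. (i, d) \<in> incident L j} = {nbr L i d}"
    using sites_incident_to_edge[OF e] ne nbr_neq[OF assms(2,4)] by auto
  ultimately have "gauge_transform L \<Lambda> \<sigma> (i, d) \<noteq> \<sigma> (i, d)"
    by (auto simp: gauge_transform_def)
  then show False using assms(3) by simp
qed

lemma sites_closed_under_nbr:
  assumes "\<Lambda> \<subseteq> sites L" "\<Lambda> \<noteq> {}"
    and closed: "\<And>i d. i \<in> \<Lambda> \<Longrightarrow> d < 2 \<Longrightarrow> nbr L i d \<in> \<Lambda>"
  shows "\<Lambda> = sites L"
proof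
  obtain p q where pq: "(p, q) \<in> \<Lambda>" using assms(2) by auto
  then have "p < L" "q < L" using assms(1) by (auto simp: sites_def)
  have row: "((p + k) mod L, q) \<in> \<Lambda>" for k
  proof (induction k)
    case (Suc k)
    then show ?case using closed[of "((p + k) mod L, q)" 0] by (simp add: nbr_def mod_Suc_eq)
  qed (use pq \<open>p < L\<close> in simp)
  have "(x, (q + k) mod L) \<in> \<Lambda>" if "x < L" for x k
  proof (induction k)
    case 0
    have "(p + (x + L - p)) mod L = x" using that \<open>p < L\<close> by simp
    then show ?case using row[of "x + L - p"] \<open>q < L\<close> by simp
  next
    case (Suc k)
    then show ?case using closed[of "(x, (q + k) mod L)" 1] by (simp add: nbr_def mod_Suc_eq)
  qed
  moreover have "(q + (y + L - q)) mod L = y" if "y < L" for y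
    using that \<open>q < L\<close> by simp
  ultimately show "sites L \<subseteq> \<Lambda>"
    by (auto simp: sites_def) (metis prod.collapse)
qed (rule assms(1))

lemma gauge_transform_fixed:
  assumes "valid_gauge L \<sigma>" "2 \<le> L" "\<Lambda> \<subseteq> sites L" "gauge_transform L \<Lambda> \<sigma> = \<sigma>"
  shows "\<Lambda> = {} \<or> \<Lambda> = sites L"
  using gauge_transform_fixed_nbr_iff[OF assms(1,2,4)] assms(3)
  by (metis sites_closed_under_nbr subsetD)

lemma modes_subset_site_modes: "modes L \<subseteq> site_modes L (sites L)"
proof
  fix k assume "k \<in> modes L"
  then have "k div 2 < L * L" by (simp add: modes_def)
  moreover from this have "0 < L" by (cases L) auto
  ultimately have "(k div 2 div L, k div 2 mod L) \<in> sites L"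
    by (simp add: sites_def less_mult_imp_div_less)
  moreover have "mode L (k div 2 div L, k div 2 mod L) (odd k) = k"
    by (simp add: mode_def)
  ultimately show "k \<in> site_modes L (sites L)" unfolding site_modes_def by (metis (mono_tags) mem_Collect_eq)
qed

lemma valid_gauge_flip_incident: "valid_gauge L (flip (incident L i) s) \<Longrightarrow> valid_gauge L s"
  unfolding valid_gauge_def flip_def incident_def by (metis (mono_tags) equation_minus_iff mem_Collect_eq)

lemma hvalid_Qop: "hvalid L \<Psi> \<Longrightarrow> hvalid L (Qop L i \<Psi>)"
  unfolding hvalid_def by (auto simp: Qop_apply intro: valid_gauge_flip_incident)

lemma hvalid_proj:
  assumes "hvalid L \<Psi>"
  shows "hvalid L (proj L i \<Psi>)"
proof -
  have "proj L i \<Psi> x \<noteq> 0 \<Longrightarrow> \<Psi> x \<noteq> 0 \<or> Qop L i \<Psi> x \<noteq> 0" for x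
    by (auto simp: proj_def)
  then show ?thesis using assms hvalid_Qop[OF assms] unfolding hvalid_def by blast
qed

lemma hvalid_foldr_proj: "hvalid L \<Psi> \<Longrightarrow> hvalid L (foldr (proj L) xs \<Psi>)"
  by (induction xs) (simp_all add: hvalid_proj)

lemma hvalid_tensor: "fvalid L \<psi> \<Longrightarrow> valid_gauge L \<sigma> \<Longrightarrow> hvalid L (tensor \<psi> \<sigma>)"
  by (auto simp: hvalid_def tensor_def fvalid_def)

lemma phys_Omega:
  assumes "fvalid L \<psi>" "valid_gauge L \<sigma>"
  shows "phys L (Omega L \<sigma> \<psi>)"
  unfolding phys_def Omega_def
  using hvalid_foldr_proj[OF hvalid_tensor[OF assms]] Qop_foldr_proj_mem by simp

lemma Omega_gauge_transform:
  assumes "\<Lambda> \<subseteq> sites L"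
  shows "Omega L (gauge_transform L \<Lambda> \<sigma>) (parity L \<Lambda> \<psi>) = Omega L \<sigma> \<psi>"
  using foldr_proj_gauss_prod[of \<Lambda> "sites_list L" L] assms finite_subset[OF assms finite_sites]
  unfolding Omega_def tensor_gauge_transform_parity by simp

lemma Omega_apply_self:
  assumes "valid_gauge L \<sigma>" "2 \<le> L" "n \<subseteq> modes L"
  shows "Omega L \<sigma> \<psi> (n, \<sigma>) = (1 + (-1) ^ card n) * \<psi> n / 2 ^ card (sites L)"
proof -
  let ?f = "\<lambda>\<Lambda>. gauss_prod L \<Lambda> (tensor \<psi> \<sigma>) (n, \<sigma>)"
  have "Omega L \<sigma> \<psi> (n, \<sigma>) = (\<Sum>\<Lambda>\<in>Pow (sites L). ?f \<Lambda>) / 2 ^ card (sites L)"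
    unfolding Omega_def foldr_proj_eq_average[OF distinct_sites_list set_sites_list[THEN equalityD1]]
    using distinct_card[OF distinct_sites_list, of L] by simp
  also have "(\<Sum>\<Lambda>\<in>Pow (sites L). ?f \<Lambda>) = (\<Sum>\<Lambda>\<in>{{}, sites L}. ?f \<Lambda>)"
  proof (rule sum.mono_neutral_right)
    show "\<forall>\<Lambda>\<in>Pow (sites L) - {{}, sites L}. ?f \<Lambda> = 0"
      using gauge_transform_fixed[OF assms(1,2)] by (auto simp: gauss_prod_apply tensor_def)
  qed (use finite_sites in auto)
  also have "\<dots> = (1 + (-1) ^ card n) * \<psi> n"
  proof -
    have "(0, 0) \<in> sites L" using assms(2) by (simp add: sites_def)
    then have "sites L \<noteq> {}" by auto
    moreover have "n \<inter> site_modes L (sites L) = n"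
      using assms(3) modes_subset_site_modes by blast
    ultimately show ?thesis
      by (simp add: gauss_prod_apply gauge_transform_sites[OF assms(2)] tensor_def algebra_simps)
  qed
  finally show ?thesis .
qed

theorem proposition2:
  fixes t m :: real
  assumes "t > 0" and "m > 0"
  shows "\<exists>U0 > 0. \<forall>(L::nat) (U::real) (\<sigma>::gauge) (a::int) (b::int) (\<psi>::fvec).
     L > 0 \<and> 4 dvd L \<and> \<bar>U\<bar> < U0 \<and>
     a \<in> {1, -1} \<and> b \<in> {1, -1} \<and>
     valid_gauge L \<sigma> \<and> (\<forall>i \<in> sites L. plaquette L \<sigma> i = -1) \<and>
     hol1 L \<sigma> = a \<and> hol2 L \<sigma> = b \<and>
     unique_ground_state L (Ham L t m U \<sigma>) \<psi>
     \<longrightarrow> phys L (Omega L \<sigma> \<psi>)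
       \<and> (\<forall>\<Lambda> \<subseteq> sites L. Omega L (gauge_transform L \<Lambda> \<sigma>) (parity L \<Lambda> \<psi>) = Omega L \<sigma> \<psi>)
       \<and> Omega L \<sigma> \<psi> \<noteq> (\<lambda>_. 0)"
proof (intro exI[of _ 1] conjI zero_less_one allI impI)
  fix L :: nat and U :: real and \<sigma> :: gauge and a b :: int and \<psi> :: fvec
  assume hyps: "0 < L \<and> 4 dvd L \<and> \<bar>U\<bar> < 1 \<and> a \<in> {1, -1} \<and> b \<in> {1, -1} \<and>
     valid_gauge L \<sigma> \<and> (\<forall>i \<in> sites L. plaquette L \<sigma> i = -1) \<and>
     hol1 L \<sigma> = a \<and> hol2 L \<sigma> = b \<and> unique_ground_state L (Ham L t m U \<sigma>) \<psi>"
  then have \<sigma>: "valid_gauge L \<sigma>" and gs: "unique_ground_state L (Ham L t m U \<sigma>) \<psi>"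
    and L: "2 \<le> L"
    by (auto dest: dvd_imp_le)
  then have "fvalid L \<psi>" by (simp add: unique_ground_state_def is_eigvec_def)
  then show "phys L (Omega L \<sigma> \<psi>)" using \<sigma> by (rule phys_Omega)
  show "Omega L (gauge_transform L \<Lambda> \<sigma>) (parity L \<Lambda> \<psi>) = Omega L \<sigma> \<psi>"
    if "\<Lambda> \<subseteq> sites L" for \<Lambda>
    using that by (rule Omega_gauge_transform)
  obtain n where "\<psi> n \<noteq> 0" "n \<subseteq> modes L" "even (card n)"
    using unique_ground_state_even_support[OF gs] by blast
  then have "Omega L \<sigma> \<psi> (n, \<sigma>) \<noteq> 0"
    by (simp add: Omega_apply_self[OF \<sigma> L])
  then show "Omega L \<sigma> \<psi> \<noteq> (\<lambda>_. 0)" by auto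
qed

end
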